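(* Let $G$ be a locally compact group, $K$ a compact subgroup with normalized Haar measure $dk$, $\chi$ a continuous unitary character of $K$, $\delta>0$, and $\mu$ a bounded continuous character of $G$. Let $f\in\mathcal{C}(G)$ satisfy $f(kxh)=\chi(k)f(x)\chi(h)$ for all $k,h\in K$, $x\in G$, and $$\Big|\int_K f(xky)\overline{\chi(k)}\,dk+\mu(y)\int_K f(xky^{-1})\overline{\chi(k)}\,dk-2f(x)f(y)\Big|\le\delta\quad\text{for all }x,y\in G.$$ Then either $f$ is bounded or $f$ satisfies $\int_K f(xky)\overline{\chi(k)}\,dk+\mu(y)\int_K f(xky^{-1})\overline{\chi(k)}\,dk=2f(x)f(y)$ for all $x,y\in G$.
   Context: A character of $G$ is a continuous homomorphism $G\to\mathbb{C}\setminus\{0\}$; a unitary character of $K$ is a continuous homomorphism $K\to\{z\in\mathbb{C}:|z|=1\}$. *)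

theory Defs
  imports "HOL-Analysis.Analysis"
begin

text \<open>A (possibly non-commutative) group written additively via the class group_add,
  with its type topology making it a Hausdorff locally compact topological group.\<close>
definition lc_group :: "('g::{t2_space, group_add}) itself \<Rightarrow> bool" where
  "lc_group _ \<longleftrightarrow>
     continuous_on UNIV (\<lambda>p::'g \<times> 'g. fst p + snd p) \<and>
     continuous_on UNIV (\<lambda>x::'g. - x) \<and>
     locally_compact_space (euclidean :: 'g topology)"

definition compact_subgroup :: "'g::{topological_space, group_add} set \<Rightarrow> bool" where
  "compact_subgroup K \<longleftrightarrow> compact K \<and> 0 \<in> K \<and>
     (\<forall>a\<in>K. \<forall>b\<in>K. a + b \<in> K) \<and> (\<forall>a\<in>K. - a \<in> K)"

definition normalized_haar :: "'g::{topological_space, group_add} set \<Rightarrow> 'g measure \<Rightarrow> bool" where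
  "normalized_haar K m \<longleftrightarrow> space m = K \<and> sets m = sets (restrict_space borel K) \<and>
     emeasure m K = 1 \<and>
     (\<forall>k\<in>K. \<forall>A\<in>sets m. emeasure m ((\<lambda>x. k + x) ` A) = emeasure m A) \<and>
     (\<forall>k\<in>K. \<forall>A\<in>sets m. emeasure m ((\<lambda>x. x + k) ` A) = emeasure m A)"

definition unitary_character_on :: "'g::{topological_space, group_add} set \<Rightarrow> ('g \<Rightarrow> complex) \<Rightarrow> bool" where
  "unitary_character_on K chi \<longleftrightarrow> continuous_on K chi \<and> (\<forall>k\<in>K. cmod (chi k) = 1) \<and>
     (\<forall>a\<in>K. \<forall>b\<in>K. chi (a + b) = chi a * chi b)"

definition group_character :: "('g::{topological_space, group_add} \<Rightarrow> complex) \<Rightarrow> bool" where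
  "group_character mu \<longleftrightarrow> continuous_on UNIV mu \<and> (\<forall>x. mu x \<noteq> 0) \<and>
     (\<forall>x y. mu (x + y) = mu x * mu y)"

end

theory Submission
  imports Defs "HOL-Probability.Probability_Measure"
begin

text \<open>Averaging the approximate equation over \<open>K\<close> gives
  \<open>Phi x y = \<integral> f (x + k + y) \<cdot> cnj (chi k) dk\<close>. When \<open>f\<close> is unbounded, a quantity \<open>w\<close>
  with \<open>\<bar>f z\<bar> \<cdot> \<bar>w\<bar>\<close> bounded uniformly in \<open>z\<close> must vanish. This forces \<open>f 0 = 1\<close> and
  \<open>mu = chi\<^sup>2\<close> on \<open>K\<close>, and then, by inversion invariance of Haar measure, \<open>Phi\<close> is
  symmetric up to \<open>3\<delta>\<close>. Consequently the double average
  \<open>Phi3 x y z = \<integral> cnj (chi k) \<cdot> Phi (x + k + y) z dk\<close> is cyclically symmetric up to \<open>O(\<delta>)\<close>,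
  so the approximate equation holds for \<open>Phi3\<close> in its middle variable as well as in its last,
  with an error \<open>O(1 + \<bar>f y\<bar>)\<close>. Combining both expansions writes \<open>2 f z\<close> times the defect
  at \<open>(x, y)\<close> as a sum of terms bounded independently of \<open>z\<close>, so the defect is zero.\<close>

lemma lc_group_continuous_on_add:
  fixes u v :: "'a::topological_space \<Rightarrow> 'g::{t2_space, group_add}"
  assumes "lc_group TYPE('g)" "continuous_on S u" "continuous_on S v"
  shows "continuous_on S (\<lambda>x. u x + v x)"
  using continuous_on_compose2[of UNIV "\<lambda>p::'g \<times> 'g. fst p + snd p", OF _ continuous_on_Pair[OF assms(2,3)]]
    assms(1) by (simp add: lc_group_def)

lemma lc_group_continuous_on_minus:
  fixes u :: "'a::topological_space \<Rightarrow> 'g::{t2_space, group_add}"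
  assumes "lc_group TYPE('g)" "continuous_on S u"
  shows "continuous_on S (\<lambda>x. - u x)"
  using continuous_on_compose2[of UNIV "\<lambda>x::'g. - x", OF _ assms(2)] assms(1)
  by (simp add: lc_group_def)

lemma unbounded_mult_bounded_imp_zero:
  fixes f :: "'a \<Rightarrow> 'b::real_normed_vector" and w :: "'c::real_normed_vector"
  assumes "\<not> bounded (range f)" "\<And>z. norm (f z) * norm w \<le> B"
  shows "w = 0"
proof (rule ccontr)
  assume "w \<noteq> 0"
  then have "norm (f z) \<le> B / norm w" for z
    using assms(2)[of z] by (simp add: pos_le_divide_eq)
  then show False
    using assms(1) unfolding bounded_iff by blast
qed

lemma group_character_zero: "group_character mu \<Longrightarrow> mu 0 = 1"
  unfolding group_character_def by (metis add_0 mult_cancel_left1)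

lemma group_character_minus: "group_character mu \<Longrightarrow> mu x * mu (- x) = 1"
  using group_character_zero[of mu] unfolding group_character_def by (metis right_minus)

lemma norm_bounded_group_character:
  assumes mu: "group_character mu" and bounded: "bounded (range mu)"
  shows "cmod (mu x) = 1"
proof -
  have le1: "cmod (mu a) \<le> 1" for a
  proof (rule ccontr)
    assume "\<not> cmod (mu a) \<le> 1"
    obtain B where B: "\<And>y. cmod (mu y) \<le> B" using bounded unfolding bounded_iff by auto
    obtain n where "B < cmod (mu a) ^ n" using real_arch_pow \<open>\<not> cmod (mu a) \<le> 1\<close> by fastforce
    moreover have "mu (((+) a ^^ n) 0) = mu a ^ n"
      using mu by (induction n) (simp_all add: group_character_zero group_character_def)
    ultimately show False using B by (metis norm_power not_le)
  qed
  have "cmod (mu x) * cmod (mu (- x)) = 1"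
    using group_character_minus[OF mu] by (metis norm_mult norm_one)
  moreover have "cmod (mu x) * cmod (mu (- x)) \<le> cmod (mu x)"
    using le1[of "- x"] by (simp add: mult_left_le)
  ultimately show ?thesis
    using le1[of x] by linarith
qed

lemma unitary_character_on_mult_cnj:
  "unitary_character_on K chi \<Longrightarrow> k \<in> K \<Longrightarrow> chi k * cnj (chi k) = 1"
  using complex_norm_square[of "chi k"] by (simp add: unitary_character_on_def)

lemma unitary_character_on_zero:
  assumes "unitary_character_on K chi" "compact_subgroup K"
  shows "chi 0 = 1"
proof -
  have "0 \<in> K" "cmod (chi 0) = 1" "chi 0 = chi 0 * chi 0"
    using assms by (auto simp: unitary_character_on_def compact_subgroup_def dest: bspec[of _ _ 0])
  then show ?thesis by (metis mult_cancel_left1 norm_zero zero_neq_one)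
qed

lemma unitary_character_on_minus:
  assumes chi: "unitary_character_on K chi" and K: "compact_subgroup K" and "k \<in> K"
  shows "chi (- k) = cnj (chi k)"
proof -
  have "- k \<in> K" using K \<open>k \<in> K\<close> by (simp add: compact_subgroup_def)
  then have "chi k * chi (- k) = chi k * cnj (chi k)"
    using chi \<open>k \<in> K\<close> unitary_character_on_zero[OF chi K] unitary_character_on_mult_cnj[OF chi]
    by (metis right_minus unitary_character_on_def)
  moreover have "chi k \<noteq> 0"
    using chi \<open>k \<in> K\<close> by (auto simp: unitary_character_on_def)
  ultimately show ?thesis by simp
qed

text \<open>Without second countability the Borel sets of \<open>A \<times> B\<close> need not be generated by
  rectangles. Instead, on compact \<open>A \<times> B\<close> a continuous function is a uniform limit of step
  functions in the first variable, built from finite open covers of \<open>A\<close>.\<close>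
primrec freeze_first :: "('a \<Rightarrow> 'a set) \<Rightarrow> 'a list \<Rightarrow> ('a \<times> 'b \<Rightarrow> 'c) \<Rightarrow> 'a \<times> 'b \<Rightarrow> 'c" where
  "freeze_first U [] g p = undefined"
| "freeze_first U (s # ss) g p = (if fst p \<in> U s then g (s, snd p) else freeze_first U ss g p)"

lemma freeze_first_measurable:
  assumes "sets M = sets (restrict_space borel A)"
    and "\<forall>s\<in>set ss. open (U s) \<and> (\<lambda>t. g (s, t)) \<in> borel_measurable N"
  shows "freeze_first U ss g \<in> borel_measurable (M \<Otimes>\<^sub>M N)"
  using assms(2)
proof (induction ss)
  case Nil
  then show ?case by (simp add: freeze_first.simps(1)[abs_def])
next
  case (Cons s ss)
  have space: "space M = A"
    using sets_eq_imp_space_eq[OF assms(1)] by (simp add: space_restrict_space)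
  have "U s \<inter> A \<in> sets M"
    using Cons.prems borel_open unfolding assms(1) sets_restrict_space by auto
  then have "(U s \<inter> A) \<times> space N \<in> sets (M \<Otimes>\<^sub>M N)"
    by (simp add: pair_measureI)
  moreover have "{p \<in> space (M \<Otimes>\<^sub>M N). fst p \<in> U s} = (U s \<inter> A) \<times> space N"
    by (auto simp: space_pair_measure space)
  moreover have "(\<lambda>p. g (s, snd p)) \<in> borel_measurable (M \<Otimes>\<^sub>M N)"
    using measurable_compose[OF measurable_snd] Cons.prems by fastforce
  ultimately show ?case
    using Cons by (simp add: freeze_first.simps(2)[abs_def] measurable_If)
qed

lemma freeze_first_dist_le:
  assumes "\<forall>s\<in>set ss. \<forall>x\<in>U s \<inter> A. \<forall>t\<in>B. dist (g (x, t)) (g (s, t)) \<le> e"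
    and "x \<in> A" "t \<in> B" "x \<in> (\<Union>s\<in>set ss. U s)"
  shows "dist (freeze_first U ss g (x, t)) (g (x, t)) \<le> e"
  using assms(1,4) by (induction ss) (use assms(2,3) in \<open>auto simp: dist_commute\<close>)

lemma uniform_approx_by_freeze_first:
  fixes g :: "'a::topological_space \<times> 'b::topological_space \<Rightarrow> 'c::metric_space"
  assumes M: "sets M = sets (restrict_space borel A)" and N: "sets N = sets (restrict_space borel B)"
    and "compact A" "compact B" "continuous_on (A \<times> B) g" "e > 0"
  obtains G where "G \<in> borel_measurable (M \<Otimes>\<^sub>M N)" "\<forall>x\<in>A. \<forall>t\<in>B. dist (G (x, t)) (g (x, t)) \<le> e"
proof -
  have "\<forall>s\<in>A. \<exists>V. s \<in> V \<and> open V \<and> (\<forall>x\<in>V \<inter> A. \<forall>t\<in>B. dist (g (x, t)) (g (s, t)) \<le> e)"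
    using continuous_on_prod_compactE[OF assms(5,4) _ assms(6)] by metis
  then obtain U where U: "\<And>s. s \<in> A \<Longrightarrow> s \<in> U s \<and> open (U s) \<and> (\<forall>x\<in>U s \<inter> A. \<forall>t\<in>B. dist (g (x, t)) (g (s, t)) \<le> e)"
    by metis
  obtain S where S: "S \<subseteq> A" "finite S" "A \<subseteq> (\<Union>s\<in>S. U s)"
    using compactE_image[OF assms(3), of A U] U by blast
  obtain ss where ss: "set ss = S" using finite_list[OF S(2)] by blast
  have "(\<lambda>t. g (s, t)) \<in> borel_measurable N" if "s \<in> A" for s
  proof -
    have "continuous_on B (\<lambda>t. g (s, t))"
      using that by (intro continuous_on_compose2[OF assms(5)] continuous_intros) auto
    then show ?thesis
      using borel_measurable_continuous_on_restrict measurable_cong_sets[OF N refl] by blast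
  qed
  then have "freeze_first U ss g \<in> borel_measurable (M \<Otimes>\<^sub>M N)"
    using U S ss by (intro freeze_first_measurable[OF M]) auto
  moreover have "\<forall>x\<in>A. \<forall>t\<in>B. dist (freeze_first U ss g (x, t)) (g (x, t)) \<le> e"
    using U S ss by (intro ballI freeze_first_dist_le[of ss U A B]) auto
  ultimately show thesis by (rule that)
qed

lemma borel_measurable_continuous_on_compact_Times:
  fixes g :: "'a::topological_space \<times> 'b::topological_space \<Rightarrow> 'c::metric_space"
  assumes M: "sets M = sets (restrict_space borel A)" and N: "sets N = sets (restrict_space borel B)"
    and "compact A" "compact B" "continuous_on (A \<times> B) g"
  shows "g \<in> borel_measurable (M \<Otimes>\<^sub>M N)"
proof -
  have "\<exists>G. G \<in> borel_measurable (M \<Otimes>\<^sub>M N) \<and> (\<forall>x\<in>A. \<forall>t\<in>B. dist (G (x, t)) (g (x, t)) \<le> 1 / Suc n)" for n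
    by (rule uniform_approx_by_freeze_first[OF assms, of "1 / Suc n"]) auto
  then obtain G where G: "\<And>n. G n \<in> borel_measurable (M \<Otimes>\<^sub>M N)"
    "\<And>n. \<forall>x\<in>A. \<forall>t\<in>B. dist (G n (x, t)) (g (x, t)) \<le> 1 / Suc n"
    by metis
  have space: "space (M \<Otimes>\<^sub>M N) = A \<times> B"
    using sets_eq_imp_space_eq[OF M] sets_eq_imp_space_eq[OF N]
    by (simp add: space_pair_measure space_restrict_space)
  show ?thesis
  proof (rule borel_measurable_LIMSEQ_metric[OF G(1)])
    fix p assume "p \<in> space (M \<Otimes>\<^sub>M N)"
    then have "\<And>n. dist (G n p) (g p) \<le> 1 / Suc n"
      using G(2) by (auto simp: space)
    then have "(\<lambda>n. dist (G n p) (g p)) \<longlonglongrightarrow> 0"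
      by (intro Lim_null_comparison[OF always_eventually LIMSEQ_Suc[OF lim_1_over_n]]) simp
    then show "(\<lambda>n. G n p) \<longlonglongrightarrow> g p"
      using tendsto_dist_iff by blast
  qed
qed

lemma distr_eq_if_inverse_preserves_emeasure:
  assumes t: "t \<in> measurable M M"
    and inv: "\<And>x. x \<in> space M \<Longrightarrow> s x \<in> space M \<and> t (s x) = x \<and> s (t x) = x"
    and preserves: "\<And>A. A \<in> sets M \<Longrightarrow> emeasure M (s ` A) = emeasure M A"
  shows "distr M M t = M"
proof (rule measure_eqI)
  fix A assume "A \<in> sets (distr M M t)"
  then have A: "A \<in> sets M" by simp
  then have "t -` A \<inter> space M = s ` A"
    using inv sets.sets_into_space[OF A] by (auto intro!: image_eqI)
  then show "emeasure (distr M M t) A = emeasure M A"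
    using emeasure_distr[OF t A] preserves[OF A] by simp
qed simp

locale compact_haar =
  fixes K :: "'g::{t2_space, group_add} set" and m :: "'g measure"
  assumes lc_group: "lc_group TYPE('g)"
    and compact_subgroup: "compact_subgroup K"
    and normalized_haar: "normalized_haar K m"
begin

lemma compact_K: "compact K"
  and zero_in_K: "0 \<in> K"
  and add_in_K: "a \<in> K \<Longrightarrow> b \<in> K \<Longrightarrow> a + b \<in> K"
  and minus_in_K: "a \<in> K \<Longrightarrow> - a \<in> K"
  using compact_subgroup by (simp_all add: compact_subgroup_def)

lemma diff_in_K: "a \<in> K \<Longrightarrow> b \<in> K \<Longrightarrow> a - b \<in> K"
  using add_in_K minus_in_K by (metis diff_conv_add_uminus)

lemma space_m [simp]: "space m = K"
  and sets_m: "sets m = sets (restrict_space borel K)"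
  using normalized_haar by (simp_all add: normalized_haar_def)

lemmas continuous_on_group_add = lc_group_continuous_on_add[OF lc_group]
lemmas continuous_on_group_minus = lc_group_continuous_on_minus[OF lc_group]

sublocale P: pair_prob_space m m
proof -
  have "prob_space m"
    using normalized_haar by (intro prob_spaceI) (simp add: normalized_haar_def)
  then show "pair_prob_space m m"
    by (simp add: pair_prob_space_def pair_sigma_finite_def prob_space_imp_sigma_finite)
qed

lemma borel_measurable_continuous_on_K:
  "continuous_on K \<phi> \<Longrightarrow> \<phi> \<in> borel_measurable m"
  using borel_measurable_continuous_on_restrict measurable_cong_sets[OF sets_m refl] by blast

lemma integrable_continuous_on_K:
  fixes \<phi> :: "'g \<Rightarrow> 'b::{banach, second_countable_topology}"
  assumes "continuous_on K \<phi>"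
  shows "integrable m \<phi>"
proof -
  obtain B where "\<forall>y\<in>\<phi> ` K. norm y \<le> B"
    using compact_continuous_image[OF assms compact_K] compact_imp_bounded bounded_iff by metis
  then show ?thesis
    by (intro P.M1.integrable_const_bound[where B=B] borel_measurable_continuous_on_K assms) auto
qed

lemma norm_integral_le_on_K:
  fixes g :: "'g \<Rightarrow> 'b::{banach, second_countable_topology}"
  assumes "\<And>k. k \<in> K \<Longrightarrow> norm (g k) \<le> C"
  shows "norm (integral\<^sup>L m g) \<le> C"
proof (cases "integrable m g")
  case True
  have "norm (integral\<^sup>L m g) \<le> (\<integral>k. norm (g k) \<partial>m)" by (rule integral_norm_bound)
  also have "\<dots> \<le> (\<integral>k. C \<partial>m)"
    using assms True by (intro integral_mono) auto
  finally show ?thesis using P.M1.prob_space by simp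
qed (use assms[OF zero_in_K] in \<open>simp add: not_integrable_integral_eq order_trans[OF norm_ge_zero]\<close>)

lemma norm_integral_diff_le_on_K:
  fixes g h :: "'g \<Rightarrow> 'b::{banach, second_countable_topology}"
  assumes "integrable m g" "integrable m h" "\<And>k. k \<in> K \<Longrightarrow> norm (g k - h k) \<le> C"
  shows "norm (integral\<^sup>L m g - integral\<^sup>L m h) \<le> C"
  using norm_integral_le_on_K[of "\<lambda>k. g k - h k", OF assms(3)] assms(1,2) by simp

lemma integral_translate_right:
  fixes \<phi> :: "'g \<Rightarrow> 'b::{banach, second_countable_topology}"
  assumes h: "h \<in> K" and \<phi>: "\<phi> \<in> borel_measurable m"
  shows "(\<integral>x. \<phi> (x + h) \<partial>m) = integral\<^sup>L m \<phi>"
proof -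
  have "(\<lambda>x. x + h) \<in> measurable (restrict_space borel K) (restrict_space borel K)"
    using h by (intro measurable_restrict_space2 borel_measurable_continuous_on_restrict
        continuous_on_group_add continuous_intros) (auto simp: space_restrict_space intro: add_in_K)
  then have translate: "(\<lambda>x. x + h) \<in> measurable m m"
    using measurable_cong_sets[OF sets_m sets_m] by blast
  have "distr m m (\<lambda>x. x + h) = m"
    by (rule distr_eq_if_inverse_preserves_emeasure[OF translate, of "\<lambda>x. x + - h"])
      (use normalized_haar h minus_in_K[OF h] in \<open>auto simp: add.assoc normalized_haar_def
         simp del: add_uminus_conv_diff intro: add_in_K\<close>)
  then show ?thesis
    using integral_distr[OF translate \<phi>] by simp
qed

lemma Fubini_continuous_on_K:
  fixes g :: "'g \<Rightarrow> 'g \<Rightarrow> 'b::{banach, second_countable_topology}"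
  assumes g: "continuous_on (K \<times> K) (\<lambda>p. g (fst p) (snd p))"
  shows "integrable m (\<lambda>x. \<integral>y. g x y \<partial>m)" "integrable m (\<lambda>y. \<integral>x. g x y \<partial>m)"
    "(\<integral>y. (\<integral>x. g x y \<partial>m) \<partial>m) = (\<integral>x. (\<integral>y. g x y \<partial>m) \<partial>m)"
proof -
  have g': "continuous_on (K \<times> K) (case_prod g)"
    using g by (simp add: case_prod_beta')
  obtain B where B: "\<forall>y\<in>case_prod g ` (K \<times> K). norm y \<le> B"
    using compact_continuous_image[OF g' compact_Times[OF compact_K compact_K]]
      compact_imp_bounded bounded_iff by metis
  have "AE p in m \<Otimes>\<^sub>M m. norm (case_prod g p) \<le> B"
    using B by (intro AE_I2) (auto simp: space_pair_measure)
  then have int: "integrable (m \<Otimes>\<^sub>M m) (case_prod g)"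
    using borel_measurable_continuous_on_compact_Times[OF sets_m sets_m compact_K compact_K g']
    by (rule P.integrable_const_bound)
  show "integrable m (\<lambda>x. \<integral>y. g x y \<partial>m)" by (rule P.integrable_fst[OF int])
  show "integrable m (\<lambda>y. \<integral>x. g x y \<partial>m)" by (rule P.integrable_snd[OF int])
  show "(\<integral>y. (\<integral>x. g x y \<partial>m) \<partial>m) = (\<integral>x. (\<integral>y. g x y \<partial>m) \<partial>m)"
    by (rule P.Fubini_integral[OF int])
qed

lemma integral_reflect:
  fixes \<phi> :: "'g \<Rightarrow> 'b::{banach, second_countable_topology}"
  assumes \<phi>: "continuous_on K \<phi>"
  shows "(\<integral>k. \<phi> (- k) \<partial>m) = integral\<^sup>L m \<phi>"
proof -
  have cont: "continuous_on (K \<times> K) (\<lambda>p. \<phi> (snd p + - fst p))"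
    by (rule continuous_on_compose2[OF \<phi> continuous_on_group_add[OF continuous_on_snd
          continuous_on_group_minus[OF continuous_on_fst]]]) (auto intro: diff_in_K)
  have inner_h: "(\<integral>h. \<phi> (k + - h) \<partial>m) = (\<integral>h. \<phi> (- h) \<partial>m)" if k: "k \<in> K" for k
  proof -
    have "continuous_on K (\<lambda>h. \<phi> (k + - h))"
      by (rule continuous_on_compose2[OF \<phi> continuous_on_group_add[OF continuous_on_const
            continuous_on_group_minus[OF continuous_on_id]]]) (use k in \<open>auto intro: diff_in_K\<close>)
    from integral_translate_right[OF k borel_measurable_continuous_on_K[OF this]]
    show ?thesis by (simp only: minus_add add.assoc[symmetric] add.right_inverse add.left_neutral)
  qed
  have inner_k: "(\<integral>k. \<phi> (k + - h) \<partial>m) = integral\<^sup>L m \<phi>" if "h \<in> K" for h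
    using integral_translate_right[OF minus_in_K[OF that] borel_measurable_continuous_on_K[OF \<phi>]] .
  have "(\<integral>k. (\<integral>h. \<phi> (k + - h) \<partial>m) \<partial>m) = (\<integral>k. (\<integral>h. \<phi> (- h) \<partial>m) \<partial>m)"
    by (intro Bochner_Integration.integral_cong refl inner_h) simp
  moreover have "(\<integral>h. (\<integral>k. \<phi> (k + - h) \<partial>m) \<partial>m) = (\<integral>h. integral\<^sup>L m \<phi> \<partial>m)"
    by (intro Bochner_Integration.integral_cong refl inner_k) simp
  ultimately show ?thesis
    using Fubini_continuous_on_K(3)[OF cont] P.M1.prob_space by simp
qed

end

locale unbounded_approx_dalembert = compact_haar K m for K :: "'g::{t2_space, group_add} set" and m +
  fixes chi mu f :: "'g \<Rightarrow> complex" and \<delta> :: real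
  assumes chi: "unitary_character_on K chi"
    and mu: "group_character mu" and mu_bounded: "bounded (range mu)"
    and f_continuous: "continuous_on UNIV f"
    and f_K_covariant: "\<forall>k\<in>K. \<forall>h\<in>K. \<forall>x. f (k + x + h) = chi k * f x * chi h"
    and approx: "\<forall>x y. cmod ((LINT k|m. f (x + k + y) * cnj (chi k))
                     + mu y * (LINT k|m. f (x + k + - y) * cnj (chi k))
                     - 2 * f x * f y) \<le> \<delta>"
    and f_unbounded: "\<not> bounded (range f)"
begin

definition Phi :: "'g \<Rightarrow> 'g \<Rightarrow> complex" where
  "Phi x y = (LINT k|m. f (x + k + y) * cnj (chi k))"

definition Phi3 :: "'g \<Rightarrow> 'g \<Rightarrow> 'g \<Rightarrow> complex" where
  "Phi3 x y z = (LINT k|m. cnj (chi k) * Phi (x + k + y) z)"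

lemma defect_le: "cmod (Phi x y + mu y * Phi x (- y) - 2 * f x * f y) \<le> \<delta>"
  using approx unfolding Phi_def by blast

lemma chi_norm: "k \<in> K \<Longrightarrow> cmod (chi k) = 1"
  and chi_continuous: "continuous_on K chi"
  using chi by (simp_all add: unitary_character_on_def)

lemmas chi_mult_cnj = unitary_character_on_mult_cnj[OF chi]
lemmas chi_zero = unitary_character_on_zero[OF chi compact_subgroup]
lemmas chi_minus = unitary_character_on_minus[OF chi compact_subgroup]
lemmas mu_norm = norm_bounded_group_character[OF mu mu_bounded]
lemmas mu_mult_minus = group_character_minus[OF mu]
lemmas mu_zero = group_character_zero[OF mu]

lemma mu_add: "mu (x + y) = mu x * mu y"
  using mu by (simp add: group_character_def)

lemma f_translate_left: "k \<in> K \<Longrightarrow> f (k + x) = chi k * f x"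
  using f_K_covariant zero_in_K chi_zero by (metis add.right_neutral mult.right_neutral)

lemma f_translate_right: "k \<in> K \<Longrightarrow> f (x + k) = f x * chi k"
  using f_K_covariant zero_in_K chi_zero by (metis add.left_neutral mult_1)

lemma continuous_on_f_comp: "continuous_on S u \<Longrightarrow> continuous_on S (\<lambda>x. f (u x))"
  by (rule continuous_on_compose2[OF f_continuous]) auto

lemma continuous_on_chi_comp: "continuous_on S u \<Longrightarrow> u ` S \<subseteq> K \<Longrightarrow> continuous_on S (\<lambda>x. chi (u x))"
  by (rule continuous_on_compose2[OF chi_continuous])

lemma continuous_on_Phi_integrand: "continuous_on K (\<lambda>k. f (x + k + y) * cnj (chi k))"
  by (intro continuous_intros continuous_on_f_comp continuous_on_group_add continuous_on_chi_comp) auto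

lemma integrable_Phi_integrand: "integrable m (\<lambda>k. f (x + k + y) * cnj (chi k))"
  by (rule integrable_continuous_on_K[OF continuous_on_Phi_integrand])

lemma Phi_zero_right: "Phi x 0 = f x"
proof -
  have "Phi x 0 = (LINT k|m. f x)"
    unfolding Phi_def
    by (rule Bochner_Integration.integral_cong) (auto simp: f_translate_right chi_mult_cnj mult.assoc)
  then show ?thesis using P.M1.prob_space by simp
qed

lemma Phi_zero_left: "Phi 0 y = f y"
proof -
  have "Phi 0 y = (LINT k|m. f y)"
    unfolding Phi_def
    by (rule Bochner_Integration.integral_cong) (auto simp: f_translate_left chi_mult_cnj mult.commute mult.left_commute)
  then show ?thesis using P.M1.prob_space by simp
qed

lemma f_zero: "f 0 = 1"
proof -
  have "Phi x 0 + mu 0 * Phi x (- 0) - 2 * f x * f 0 = f x * (2 - 2 * f 0)" for x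
    by (simp add: Phi_zero_right mu_zero algebra_simps)
  then have "cmod (f x) * cmod (2 - 2 * f 0) \<le> \<delta>" for x
    using defect_le[of x 0] by (simp add: norm_mult)
  then show ?thesis
    using unbounded_mult_bounded_imp_zero[OF f_unbounded] by fastforce
qed

lemma reflection_le: "cmod (mu x * f (- x) - f x) \<le> \<delta>"
  using defect_le[of 0 x] by (simp add: Phi_zero_left f_zero)

lemma mu_mult_cnj_chi: assumes k: "k \<in> K" shows "mu k * cnj (chi k) = chi k"
proof -
  have "cmod (f x) * cmod (mu k * cnj (chi k) - chi k) \<le> 2 * \<delta>" for x
  proof -
    have "f x * (mu k * cnj (chi k) - chi k)
        = (mu (k + x) * f (- (k + x)) - f (k + x)) - mu k * cnj (chi k) * (mu x * f (- x) - f x)"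
      using f_translate_right[OF minus_in_K[OF k], of "- x"]
      by (simp add: f_translate_left[OF k] chi_minus[OF k] minus_add mu_add algebra_simps)
    also have "cmod \<dots> \<le> \<delta> + \<delta>"
    proof (rule norm_triangle_le_diff[OF add_mono])
      show "cmod (mu k * cnj (chi k) * (mu x * f (- x) - f x)) \<le> \<delta>"
        using reflection_le[of x] by (simp add: norm_mult mu_norm chi_norm[OF k])
    qed (rule reflection_le)
    finally show ?thesis by (simp add: norm_mult)
  qed
  then show ?thesis
    using unbounded_mult_bounded_imp_zero[OF f_unbounded] by fastforce
qed

lemma Phi_reflect_swap_le: "cmod (mu y * Phi x (- y) - mu x * Phi y (- x)) \<le> \<delta>"
proof -
  have reflect: "Phi y (- x) = (LINT k|m. f (y + - k + - x) * cnj (chi (- k)))"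
    unfolding Phi_def using integral_reflect[OF continuous_on_Phi_integrand[of y "- x"]] by simp
  have reflected_integrable: "integrable m (\<lambda>k. f (y + - k + - x) * cnj (chi (- k)))"
    by (intro integrable_continuous_on_K continuous_intros continuous_on_f_comp continuous_on_chi_comp
        continuous_on_group_add continuous_on_group_minus) (auto intro: minus_in_K)
  have pointwise: "cmod (mu y * (f (x + k + - y) * cnj (chi k)) - mu x * (f (y + - k + - x) * cnj (chi (- k)))) \<le> \<delta>"
    if k: "k \<in> K" for k
  proof -
    define w where "w = x + k + - y"
    have minus_w: "y + - k + - x = - w"
      unfolding w_def by (simp only: minus_add minus_minus add.assoc)
    have "mu y * cnj (chi k) * mu w = (mu y * mu (- y)) * mu x * (mu k * cnj (chi k))"
      unfolding w_def mu_add by (simp only: ac_simps)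
    then have "mu x * chi k = mu y * cnj (chi k) * mu w"
      using mu_mult_cnj_chi[OF k] mu_mult_minus[of y] by simp
    then have eq: "mu y * (f w * cnj (chi k)) - mu x * (f (- w) * chi k)
        = mu y * cnj (chi k) * (f w - mu w * f (- w))"
      by (simp add: algebra_simps)
    have "cmod (mu y * cnj (chi k) * (f w - mu w * f (- w))) \<le> \<delta>"
      using reflection_le[of w] by (simp add: norm_mult mu_norm chi_norm[OF k] norm_minus_commute)
    then show ?thesis
      unfolding w_def[symmetric] minus_w chi_minus[OF k] complex_cnj_cnj eq .
  qed
  have "cmod ((LINT k|m. mu y * (f (x + k + - y) * cnj (chi k)))
      - (LINT k|m. mu x * (f (y + - k + - x) * cnj (chi (- k))))) \<le> \<delta>"
    by (rule norm_integral_diff_le_on_K[OF integrable_mult_right[OF integrable_Phi_integrand]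
          integrable_mult_right[OF reflected_integrable] pointwise])
  then show ?thesis
    unfolding reflect by (simp add: Phi_def)
qed

lemma Phi_swap_le: "cmod (Phi x y - Phi y x) \<le> 3 * \<delta>"
proof -
  define d1 where "d1 = Phi x y + mu y * Phi x (- y) - 2 * f x * f y"
  define d2 where "d2 = Phi y x + mu x * Phi y (- x) - 2 * f y * f x"
  define r where "r = mu y * Phi x (- y) - mu x * Phi y (- x)"
  have eq: "Phi x y - Phi y x = d1 - d2 - r"
    by (simp add: d1_def d2_def r_def algebra_simps)
  have "cmod d1 \<le> \<delta>" "cmod d2 \<le> \<delta>" "cmod r \<le> \<delta>"
    unfolding d1_def d2_def r_def by (rule defect_le defect_le Phi_reflect_swap_le)+
  then show ?thesis
    unfolding eq using norm_triangle_ineq4[of "d1 - d2" r] norm_triangle_ineq4[of d1 d2] by linarith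
qed

lemma Phi3_Fubini:
  shows integrable_Phi3_integrand: "integrable m (\<lambda>k. cnj (chi k) * Phi (x + k + y) z)"
    and integrable_Phi3_swapped_integrand: "integrable m (\<lambda>k. cnj (chi k) * Phi x (y + k + z))"
    and Phi3_swapped: "Phi3 x y z = (LINT k|m. cnj (chi k) * Phi x (y + k + z))"
proof -
  define g where "g k l = f (x + k + y + l + z) * cnj (chi l) * cnj (chi k)" for k l
  have "continuous_on (K \<times> K) (\<lambda>p. g (fst p) (snd p))"
    unfolding g_def by (intro continuous_intros continuous_on_f_comp continuous_on_group_add
        continuous_on_chi_comp) auto
  note Fubini = Fubini_continuous_on_K[OF this]
  have inner_l: "(\<lambda>k. \<integral>l. g k l \<partial>m) = (\<lambda>k. cnj (chi k) * Phi (x + k + y) z)"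
    by (simp add: g_def Phi_def mult.commute mult.left_commute del: integral_mult_left_zero)
  have inner_k: "(\<lambda>l. \<integral>k. g k l \<partial>m) = (\<lambda>l. cnj (chi l) * Phi x (y + l + z))"
    by (simp add: g_def Phi_def add.assoc mult.commute mult.left_commute del: integral_mult_left_zero)
  show "integrable m (\<lambda>k. cnj (chi k) * Phi (x + k + y) z)"
    using Fubini(1) unfolding inner_l .
  show "integrable m (\<lambda>k. cnj (chi k) * Phi x (y + k + z))"
    using Fubini(2) unfolding inner_k .
  show "Phi3 x y z = (LINT k|m. cnj (chi k) * Phi x (y + k + z))"
    using Fubini(3) unfolding inner_l inner_k Phi3_def by simp
qed

lemma Phi3_rotate_le: "cmod (Phi3 x y z - Phi3 y z x) \<le> 3 * \<delta>"
proof -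
  have "cmod ((LINT k|m. cnj (chi k) * Phi x (y + k + z)) - (LINT k|m. cnj (chi k) * Phi (y + k + z) x))
      \<le> 3 * \<delta>"
  proof (rule norm_integral_diff_le_on_K[OF integrable_Phi3_swapped_integrand integrable_Phi3_integrand])
    fix k assume "k \<in> K"
    then show "cmod (cnj (chi k) * Phi x (y + k + z) - cnj (chi k) * Phi (y + k + z) x) \<le> 3 * \<delta>"
      using Phi_swap_le[of x "y + k + z"]
      by (simp add: norm_mult chi_norm flip: right_diff_distrib)
  qed
  then show ?thesis by (simp add: Phi3_swapped[of x y z] Phi3_def[of y z x])
qed

lemma Phi3_defect_le: "cmod (Phi3 x y z + mu z * Phi3 x y (- z) - 2 * f z * Phi x y) \<le> \<delta>"
proof -
  have bound: "cmod ((LINT k|m. cnj (chi k) * Phi (x + k + y) z + mu z * (cnj (chi k) * Phi (x + k + y) (- z)))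
      - (LINT k|m. 2 * f z * (f (x + k + y) * cnj (chi k)))) \<le> \<delta>"
  proof (rule norm_integral_diff_le_on_K)
    show "integrable m (\<lambda>k. cnj (chi k) * Phi (x + k + y) z + mu z * (cnj (chi k) * Phi (x + k + y) (- z)))"
      by (intro Bochner_Integration.integrable_add integrable_mult_right integrable_Phi3_integrand)
    show "integrable m (\<lambda>k. 2 * f z * (f (x + k + y) * cnj (chi k)))"
      by (intro integrable_mult_right integrable_Phi_integrand)
    fix k assume "k \<in> K"
    have "cnj (chi k) * Phi (x + k + y) z + mu z * (cnj (chi k) * Phi (x + k + y) (- z))
        - 2 * f z * (f (x + k + y) * cnj (chi k))
        = cnj (chi k) * (Phi (x + k + y) z + mu z * Phi (x + k + y) (- z) - 2 * f (x + k + y) * f z)"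
      by (simp add: algebra_simps)
    then show "cmod (cnj (chi k) * Phi (x + k + y) z + mu z * (cnj (chi k) * Phi (x + k + y) (- z))
        - 2 * f z * (f (x + k + y) * cnj (chi k))) \<le> \<delta>"
      using defect_le[of "x + k + y" z] \<open>k \<in> K\<close> by (simp add: norm_mult chi_norm)
  qed
  have lhs: "(LINT k|m. cnj (chi k) * Phi (x + k + y) z + mu z * (cnj (chi k) * Phi (x + k + y) (- z)))
      = Phi3 x y z + mu z * Phi3 x y (- z)"
    by (simp add: Phi3_def integrable_Phi3_integrand)
  have rhs: "(LINT k|m. 2 * f z * (f (x + k + y) * cnj (chi k))) = 2 * f z * Phi x y"
    unfolding Phi_def by simp
  show ?thesis using bound unfolding lhs rhs .
qed

lemma Phi3_middle_defect_le:
  "cmod (Phi3 x y z + mu y * Phi3 x (- y) z - 2 * f y * Phi x z) \<le> 13 * \<delta> + 6 * \<delta> * cmod (f y)"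
proof -
  have "Phi3 x y z + mu y * Phi3 x (- y) z - 2 * f y * Phi x z
      = (Phi3 x y z - Phi3 z x y) + mu y * (Phi3 x (- y) z - Phi3 z x (- y))
        + (Phi3 z x y + mu y * Phi3 z x (- y) - 2 * f y * Phi z x) + 2 * f y * (Phi z x - Phi x z)"
    by (simp add: algebra_simps)
  also have "cmod \<dots> \<le> 6 * \<delta> + 6 * \<delta> + \<delta> + 2 * cmod (f y) * (3 * \<delta>)"
  proof (intro norm_triangle_mono)
    have rotate_twice: "cmod (Phi3 x v z - Phi3 z x v) \<le> 6 * \<delta>" for v
      using norm_diff_triangle_le[OF Phi3_rotate_le[of x v z] Phi3_rotate_le[of v z x]] by simp
    show "cmod (Phi3 x y z - Phi3 z x y) \<le> 6 * \<delta>" by (rule rotate_twice)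
    show "cmod (mu y * (Phi3 x (- y) z - Phi3 z x (- y))) \<le> 6 * \<delta>"
      using rotate_twice by (simp add: norm_mult mu_norm)
    show "cmod (Phi3 z x y + mu y * Phi3 z x (- y) - 2 * f y * Phi z x) \<le> \<delta>"
      by (rule Phi3_defect_le)
    have "2 * cmod (f y) * cmod (Phi z x - Phi x z) \<le> 2 * cmod (f y) * (3 * \<delta>)"
      by (intro mult_left_mono Phi_swap_le) simp
    then show "cmod (2 * f y * (Phi z x - Phi x z)) \<le> 2 * cmod (f y) * (3 * \<delta>)"
      by (simp add: norm_mult)
  qed
  finally show ?thesis by (simp add: algebra_simps)
qed

lemma dalembert_eq: "Phi x y + mu y * Phi x (- y) = 2 * f x * f y"
proof -
  define M where "M = 13 * \<delta> + 6 * \<delta> * cmod (f y)"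
  define e where "e = Phi x y + mu y * Phi x (- y) - 2 * f x * f y"
  have "cmod (f z) * cmod e \<le> (2 * \<delta> + 2 * M + 2 * cmod (f y) * \<delta>) / 2" for z
  proof -
    text \<open>Expand \<open>Phi3 x (\<plusminus>y) (\<plusminus>z)\<close> once in its last and once in its middle variable.\<close>
    have "2 * f z * e
      = - (Phi3 x y z + mu z * Phi3 x y (- z) - 2 * f z * Phi x y)
        + - (mu y * (Phi3 x (- y) z + mu z * Phi3 x (- y) (- z) - 2 * f z * Phi x (- y)))
        + (Phi3 x y z + mu y * Phi3 x (- y) z - 2 * f y * Phi x z)
        + mu z * (Phi3 x y (- z) + mu y * Phi3 x (- y) (- z) - 2 * f y * Phi x (- z))
        + 2 * f y * (Phi x z + mu z * Phi x (- z) - 2 * f x * f z)"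
      by (simp add: e_def algebra_simps)
    also have "cmod \<dots> \<le> \<delta> + \<delta> + M + M + 2 * cmod (f y) * \<delta>"
    proof (intro norm_triangle_mono)
      show "cmod (- (Phi3 x y z + mu z * Phi3 x y (- z) - 2 * f z * Phi x y)) \<le> \<delta>"
        unfolding norm_minus_cancel by (rule Phi3_defect_le)
      show "cmod (- (mu y * (Phi3 x (- y) z + mu z * Phi3 x (- y) (- z) - 2 * f z * Phi x (- y)))) \<le> \<delta>"
        using Phi3_defect_le by (simp add: norm_mult mu_norm)
      show "cmod (Phi3 x y z + mu y * Phi3 x (- y) z - 2 * f y * Phi x z) \<le> M"
        unfolding M_def by (rule Phi3_middle_defect_le)
      show "cmod (mu z * (Phi3 x y (- z) + mu y * Phi3 x (- y) (- z) - 2 * f y * Phi x (- z))) \<le> M"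
        unfolding M_def using Phi3_middle_defect_le by (simp add: norm_mult mu_norm)
      have "2 * cmod (f y) * cmod (Phi x z + mu z * Phi x (- z) - 2 * f x * f z) \<le> 2 * cmod (f y) * \<delta>"
        by (intro mult_left_mono defect_le) simp
      then show "cmod (2 * f y * (Phi x z + mu z * Phi x (- z) - 2 * f x * f z)) \<le> 2 * cmod (f y) * \<delta>"
        by (simp add: norm_mult)
    qed
    finally show ?thesis by (simp add: norm_mult)
  qed
  then have "e = 0"
    by (rule unbounded_mult_bounded_imp_zero[OF f_unbounded])
  then show ?thesis by (simp add: e_def)
qed

end

theorem corollary5p8:
  fixes K :: "'g::{t2_space, group_add} set" and m :: "'g measure"
    and chi mu f :: "'g \<Rightarrow> complex" and \<delta> :: real
  assumes "lc_group TYPE('g)"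
    and "compact_subgroup K"
    and "normalized_haar K m"
    and "unitary_character_on K chi"
    and "\<delta> > 0"
    and "group_character mu" and "bounded (range mu)"
    and "continuous_on UNIV f"
    and "\<forall>k\<in>K. \<forall>h\<in>K. \<forall>x. f (k + x + h) = chi k * f x * chi h"
    and "\<forall>x y. cmod ((LINT k|m. f (x + k + y) * cnj (chi k))
                     + mu y * (LINT k|m. f (x + k + - y) * cnj (chi k))
                     - 2 * f x * f y) \<le> \<delta>"
  shows "bounded (range f) \<or>
         (\<forall>x y. (LINT k|m. f (x + k + y) * cnj (chi k))
                + mu y * (LINT k|m. f (x + k + - y) * cnj (chi k))
                = 2 * f x * f y)"
proof (cases "bounded (range f)")
  case False
  interpret unbounded_approx_dalembert K m chi mu f \<delta>
    by (intro unbounded_approx_dalembert.intro compact_haar.intro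
        unbounded_approx_dalembert_axioms.intro) (use assms False in auto)
  show ?thesis
    using dalembert_eq unfolding Phi_def by blast
qed simp

end
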